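(* Let $N$ and $M$ be $G$-graded near-rings with multiplicative identity. If every proper ideal of $N$ and every proper ideal of $M$ is a product of graded prime ideals, then every proper ideal of $N\times M$ is a product of graded prime ideals of $N\times M$.
   Context: A (right) near-ring is a set $N$ with two binary operations $+$ and $\cdot$ such that $(N,+)$ is a group (not necessarily abelian), $(N,\cdot)$ is a semigroup, and $(a+b)c=ac+bc$. An ideal of $N$ is a normal subgroup $I$ of $(N,+)$ such that $ni\in I$ and $(n+i)m-nm\in I$ for all $n,m\in N$, $i\in I$. For ideals $A_1,\dots,A_n$, the product $A_1\cdots A_n$ is the set of products $\{a_1\cdots a_n: a_i\in A_i\}$. Let $G$ be a multiplicative monoid with identity. $N$ is $G$-graded if there is a family $\{N_\sigma\}_{\sigma\in G}$ of normal subgroups of $(N,+)$ with $N=\bigoplus_{\sigma\in G}N_\sigma$ and $N_\sigma N_\tau\subseteq N_{\sigma\tau}$. For $X\subseteq N$, $X_g=X\cap N_g$. An ideal $I$ is graded if $I=\bigoplus_g I_g$. The direct product $N\times M$ has componentwise operations and is $G$-graded by $(N\times M)_g=N_g\times M_g$. For subsets $X,Y$, $XY=\{xy:x\in X,y\in Y\}$. A graded ideal $P$ is graded prime if $P\neq N$ and for all ideals $A,B$ of $N$ and all $g,h\in G$: $A_gB_h\subseteq P_{gh}$ implies $A_g\subseteq P_g$ or $B_h\subseteq P_h$. *)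

theory Defs
  imports "HOL-Algebra.Algebra"
begin

text \<open>The field one is only meaningful
  when one additionally assumes monoid R (near-ring with identity).\<close>

locale near_ring =
  fixes R (structure)
  assumes add_group: "group (add_monoid R)"
    and m_closed: "\<And>a b. \<lbrakk>a \<in> carrier R; b \<in> carrier R\<rbrakk> \<Longrightarrow> a \<otimes> b \<in> carrier R"
    and m_assoc: "\<And>a b c. \<lbrakk>a \<in> carrier R; b \<in> carrier R; c \<in> carrier R\<rbrakk>
        \<Longrightarrow> (a \<otimes> b) \<otimes> c = a \<otimes> (b \<otimes> c)"
    and right_distrib:
      "\<And>a b c. \<lbrakk>a \<in> carrier R; b \<in> carrier R; c \<in> carrier R\<rbrakk>
        \<Longrightarrow> (a \<oplus> b) \<otimes> c = a \<otimes> c \<oplus> b \<otimes> c"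

definition internal_direct_sum :: "('a, 'm) monoid_scheme \<Rightarrow> ('g \<Rightarrow> 'a set) \<Rightarrow> bool" where
  "internal_direct_sum A F \<longleftrightarrow>
     (\<forall>\<sigma>. F \<sigma> \<lhd> A) \<and>
     generate A (\<Union>\<sigma>. F \<sigma>) = carrier A \<and>
     (\<forall>\<sigma>. F \<sigma> \<inter> generate A (\<Union>\<tau>\<in>-{\<sigma>}. F \<tau>) = {\<one>\<^bsub>A\<^esub>})"

definition graded_near_ring :: "('a, 'm) ring_scheme \<Rightarrow> ('g::monoid_mult \<Rightarrow> 'a set) \<Rightarrow> bool" where
  "graded_near_ring R NG \<longleftrightarrow>
     near_ring R \<and>
     internal_direct_sum (add_monoid R) NG \<and>
     (\<forall>\<sigma> \<tau>. \<forall>x\<in>NG \<sigma>. \<forall>y\<in>NG \<tau>. x \<otimes>\<^bsub>R\<^esub> y \<in> NG (\<sigma> * \<tau>))"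

definition nr_ideal :: "('a, 'm) ring_scheme \<Rightarrow> 'a set \<Rightarrow> bool" where
  "nr_ideal R I \<longleftrightarrow>
     I \<lhd> add_monoid R \<and>
     (\<forall>n\<in>carrier R. \<forall>i\<in>I. n \<otimes>\<^bsub>R\<^esub> i \<in> I) \<and>
     (\<forall>n\<in>carrier R. \<forall>m\<in>carrier R. \<forall>i\<in>I.
        (n \<oplus>\<^bsub>R\<^esub> i) \<otimes>\<^bsub>R\<^esub> m \<ominus>\<^bsub>R\<^esub> (n \<otimes>\<^bsub>R\<^esub> m) \<in> I)"

definition graded_ideal :: "('a, 'm) ring_scheme \<Rightarrow> ('g \<Rightarrow> 'a set) \<Rightarrow> 'a set \<Rightarrow> bool" where
  "graded_ideal R NG I \<longleftrightarrow>
     nr_ideal R I \<and>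
     internal_direct_sum ((add_monoid R)\<lparr>carrier := I\<rparr>) (\<lambda>g. I \<inter> NG g)"

text \<open>Elementwise product XY = {xy : x in X, y in Y} is HOL-Algebra's set_mult (Coset.thy).\<close>

definition graded_prime :: "('a, 'm) ring_scheme \<Rightarrow> ('g::monoid_mult \<Rightarrow> 'a set) \<Rightarrow> 'a set \<Rightarrow> bool" where
  "graded_prime R NG P \<longleftrightarrow>
     graded_ideal R NG P \<and> P \<noteq> carrier R \<and>
     (\<forall>A B g h. nr_ideal R A \<longrightarrow> nr_ideal R B \<longrightarrow>
        set_mult R (A \<inter> NG g) (B \<inter> NG h) \<subseteq> P \<inter> NG (g * h) \<longrightarrow>
        A \<inter> NG g \<subseteq> P \<inter> NG g \<or> B \<inter> NG h \<subseteq> P \<inter> NG h)"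

fun ideal_list_prod :: "('a, 'm) ring_scheme \<Rightarrow> 'a set list \<Rightarrow> 'a set" where
  "ideal_list_prod R [] = {\<one>\<^bsub>R\<^esub>}"
| "ideal_list_prod R [A] = A"
| "ideal_list_prod R (A # As) = set_mult R A (ideal_list_prod R As)"

definition proper_ideals_prod_graded_primes :: "('a, 'm) ring_scheme \<Rightarrow> ('g::monoid_mult \<Rightarrow> 'a set) \<Rightarrow> bool" where
  "proper_ideals_prod_graded_primes R NG \<longleftrightarrow>
     (\<forall>I. nr_ideal R I \<and> I \<noteq> carrier R \<longrightarrow>
        (\<exists>Ps. Ps \<noteq> [] \<and> (\<forall>P\<in>set Ps. graded_prime R NG P) \<and> I = ideal_list_prod R Ps))"

definition nr_prod :: "('a, 'm) ring_scheme \<Rightarrow> ('b, 'n) ring_scheme \<Rightarrow> ('a \<times> 'b) ring" where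
  "nr_prod R S =
     \<lparr>carrier = carrier R \<times> carrier S,
      monoid.mult = (\<lambda>x y. (fst x \<otimes>\<^bsub>R\<^esub> fst y, snd x \<otimes>\<^bsub>S\<^esub> snd y)),
      one = (\<one>\<^bsub>R\<^esub>, \<one>\<^bsub>S\<^esub>),
      ring.zero = (\<zero>\<^bsub>R\<^esub>, \<zero>\<^bsub>S\<^esub>),
      ring.add = (\<lambda>x y. (fst x \<oplus>\<^bsub>R\<^esub> fst y, snd x \<oplus>\<^bsub>S\<^esub> snd y))\<rparr>"

definition prod_grading :: "('g \<Rightarrow> 'a set) \<Rightarrow> ('g \<Rightarrow> 'b set) \<Rightarrow> 'g \<Rightarrow> ('a \<times> 'b) set" where
  "prod_grading NG MG g = NG g \<times> MG g"

end

theory Submission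
  imports Defs
begin

text \<open>With an identity, an ideal \<open>I\<close> of \<open>N \<times> M\<close> is the product \<open>I\<^sub>1 \<times> I\<^sub>2\<close> of its two
  projections, since \<open>(1, 0)(a, b) = (a, 0)\<close> and \<open>(0, 1)(a', b') = (0, b')\<close>.
  A graded prime \<open>P\<close> of \<open>N\<close> gives the graded prime \<open>P \<times> M\<close> of \<open>N \<times> M\<close>: it is the preimage of
  \<open>P\<close> under the first projection, which maps the homogeneous part \<open>A\<^sub>g\<close> of every ideal onto
  the homogeneous part of its image; symmetrically for \<open>N \<times> Q\<close>.
  Writing \<open>I\<^sub>1 = P\<^sub>1\<cdots>P\<^sub>k\<close> and \<open>I\<^sub>2 = Q\<^sub>1\<cdots>Q\<^sub>l\<close> (the empty product being the whole near-ring)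
  and using \<open>P N = P\<close> and \<open>N Q = Q\<close>, we get
  \<open>I = (P\<^sub>1 \<times> M)\<cdots>(P\<^sub>k \<times> M)(N \<times> Q\<^sub>1)\<cdots>(N \<times> Q\<^sub>l)\<close>.\<close>

sublocale near_ring \<subseteq> add: group "add_monoid R"
  rewrites "carrier (add_monoid R) = carrier R"
    and "monoid.mult (add_monoid R) = ring.add R"
    and "one (add_monoid R) = ring.zero R"
    and "m_inv (add_monoid R) = a_inv R"
  by (rule add_group) (simp_all add: a_inv_def)

lemma nr_ideal_subset: "nr_ideal R I \<Longrightarrow> I \<subseteq> carrier R"
  unfolding nr_ideal_def using normal_imp_subgroup subgroup.subset by fastforce

lemma nr_ideal_add_closed: "nr_ideal R I \<Longrightarrow> a \<in> I \<Longrightarrow> b \<in> I \<Longrightarrow> a \<oplus>\<^bsub>R\<^esub> b \<in> I"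
  unfolding nr_ideal_def using normal_imp_subgroup subgroup.m_closed by fastforce

lemma ideal_list_prod_Cons: "As \<noteq> [] \<Longrightarrow> ideal_list_prod R (A # As) = set_mult R A (ideal_list_prod R As)"
  by (cases As) auto

context near_ring
begin

lemma l_null: "m \<in> carrier R \<Longrightarrow> \<zero> \<otimes> m = \<zero>"
proof -
  assume m: "m \<in> carrier R"
  then have zm: "\<zero> \<otimes> m \<in> carrier R"
    using m_closed by simp
  have "\<zero> \<otimes> m \<oplus> \<zero> \<otimes> m = \<zero> \<otimes> m \<oplus> \<zero>"
    using right_distrib[of \<zero> \<zero> m] m zm by simp
  then show ?thesis
    using add.l_cancel[of "\<zero> \<otimes> m" "\<zero> \<otimes> m" \<zero>] zm by simp
qed

lemma nr_ideal_carrier: "nr_ideal R (carrier R)"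
  unfolding nr_ideal_def
proof (intro conjI ballI)
  show "carrier R \<lhd> add_monoid R"
    using add.normal_self by simp
  show "n \<otimes> i \<in> carrier R" if "n \<in> carrier R" "i \<in> carrier R" for n i
    using that by (rule m_closed)
  show "(n \<oplus> i) \<otimes> m \<ominus> n \<otimes> m \<in> carrier R" if "n \<in> carrier R" "m \<in> carrier R" "i \<in> carrier R" for n m i
    using that by (simp add: a_minus_def m_closed)
qed

lemma nr_ideal_right_mult:
  assumes I: "nr_ideal R I" and i: "i \<in> I" and m: "m \<in> carrier R"
  shows "i \<otimes> m \<in> I"
proof -
  have "i \<in> carrier R"
    using I i nr_ideal_subset by blast
  moreover have "(\<zero> \<oplus> i) \<otimes> m \<ominus> \<zero> \<otimes> m \<in> I"
    using I i m add.one_closed unfolding nr_ideal_def by blast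
  moreover have "i \<otimes> m \<ominus> \<zero> = i \<otimes> m" if "i \<in> carrier R"
    using that m m_closed add.r_one by (simp add: a_minus_def)
  ultimately show ?thesis
    using m by (simp add: l_null)
qed

lemma ideal_list_prod_subset:
  "\<forall>Q\<in>set Qs. nr_ideal R Q \<Longrightarrow> Qs \<noteq> [] \<Longrightarrow> ideal_list_prod R Qs \<subseteq> carrier R"
proof (induction Qs)
  case (Cons Q Qs)
  then show ?case
    using nr_ideal_subset[of R Q] m_closed
    by (cases "Qs = []") (auto simp: ideal_list_prod_Cons set_mult_def)
qed simp

lemma ideal_list_prod_left_mult_closed:
  assumes "\<forall>Q\<in>set Qs. nr_ideal R Q" "Qs \<noteq> []" "n \<in> carrier R" "x \<in> ideal_list_prod R Qs"
  shows "n \<otimes> x \<in> ideal_list_prod R Qs"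
proof -
  obtain Q Qs' where Qs: "Qs = Q # Qs'"
    using assms(2) by (cases Qs) auto
  have Q: "nr_ideal R Q"
    using assms(1) Qs by simp
  have left_closed: "n \<otimes> q \<in> Q" if "q \<in> Q" for q
    using Q assms(3) that unfolding nr_ideal_def by blast
  show ?thesis
  proof (cases "Qs' = []")
    case True
    then show ?thesis
      using assms(4) Qs left_closed by simp
  next
    case False
    then obtain q y where q: "q \<in> Q" and y: "y \<in> ideal_list_prod R Qs'" and x: "x = q \<otimes> y"
      using assms(4) Qs by (auto simp: ideal_list_prod_Cons set_mult_def)
    have "y \<in> carrier R"
      using ideal_list_prod_subset[of Qs'] assms(1) Qs False y by auto
    moreover have "q \<in> carrier R"
      using q nr_ideal_subset[OF Q] by blast
    ultimately have "n \<otimes> x = (n \<otimes> q) \<otimes> y"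
      using x m_assoc assms(3) by simp
    then show ?thesis
      using left_closed[OF q] y Qs False by (auto simp: ideal_list_prod_Cons set_mult_def)
  qed
qed

lemma set_mult_carrier_right:
  assumes "monoid R" "nr_ideal R P"
  shows "set_mult R P (carrier R) = P"
proof
  show "set_mult R P (carrier R) \<subseteq> P"
    using nr_ideal_right_mult[OF assms(2)] unfolding set_mult_def by blast
  show "P \<subseteq> set_mult R P (carrier R)"
  proof
    fix p assume p: "p \<in> P"
    then have "p = p \<otimes> \<one>"
      using monoid.r_one[OF assms(1)] nr_ideal_subset[OF assms(2)] by auto
    then show "p \<in> set_mult R P (carrier R)"
      using p monoid.one_closed[OF assms(1)] unfolding set_mult_def by blast
  qed
qed

lemma set_mult_carrier_left:
  assumes "monoid R" "Y \<subseteq> carrier R" "\<And>n y. n \<in> carrier R \<Longrightarrow> y \<in> Y \<Longrightarrow> n \<otimes> y \<in> Y"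
  shows "set_mult R (carrier R) Y = Y"
proof
  show "set_mult R (carrier R) Y \<subseteq> Y"
    using assms(3) unfolding set_mult_def by blast
  show "Y \<subseteq> set_mult R (carrier R) Y"
  proof
    fix y assume y: "y \<in> Y"
    then have "y = \<one> \<otimes> y"
      using monoid.l_one[OF assms(1)] assms(2) by auto
    then show "y \<in> set_mult R (carrier R) Y"
      using y monoid.one_closed[OF assms(1)] unfolding set_mult_def by blast
  qed
qed

lemma ideal_list_prod_replicate_carrier:
  assumes "monoid R" "k > 0"
  shows "ideal_list_prod R (replicate k (carrier R)) = carrier R"
  using assms(2)
proof (induction k)
  case (Suc k)
  then show ?case
    using set_mult_carrier_right[OF assms(1) nr_ideal_carrier]
    by (cases "k = 0") (auto simp: ideal_list_prod_Cons)
qed simp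

lemma ideal_list_prod_append_carriers:
  assumes "monoid R" "\<forall>P\<in>set Ps. nr_ideal R P" "Ps @ replicate k (carrier R) \<noteq> []"
  shows "ideal_list_prod R (Ps @ replicate k (carrier R))
    = (if Ps = [] then carrier R else ideal_list_prod R Ps)"
  using assms(2,3)
proof (induction Ps)
  case Nil
  then show ?case
    using ideal_list_prod_replicate_carrier[OF assms(1)] by simp
next
  case (Cons P Ps)
  show ?case
  proof (cases "Ps @ replicate k (carrier R) = []")
    case False
    then have "ideal_list_prod R ((P # Ps) @ replicate k (carrier R))
        = set_mult R P (if Ps = [] then carrier R else ideal_list_prod R Ps)"
      using Cons by (simp add: ideal_list_prod_Cons)
    then show ?thesis
      using set_mult_carrier_right[OF assms(1)] Cons.prems by (simp add: ideal_list_prod_Cons)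
  qed simp
qed

lemma ideal_list_prod_carriers_append:
  assumes "monoid R" "\<forall>Q\<in>set Qs. nr_ideal R Q" "replicate k (carrier R) @ Qs \<noteq> []"
  shows "ideal_list_prod R (replicate k (carrier R) @ Qs)
    = (if Qs = [] then carrier R else ideal_list_prod R Qs)"
proof (cases "Qs = []")
  case True
  then show ?thesis
    using ideal_list_prod_replicate_carrier[OF assms(1)] assms(3) by simp
next
  case False
  have "set_mult R (carrier R) (ideal_list_prod R Qs) = ideal_list_prod R Qs"
    using set_mult_carrier_left[OF assms(1) ideal_list_prod_subset]
      ideal_list_prod_left_mult_closed assms(2) False by blast
  then show ?thesis
    using False by (induction k) (auto simp: ideal_list_prod_Cons)
qed

end

lemma nr_prod_simps [simp]:
  "carrier (nr_prod R S) = carrier R \<times> carrier S"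
  "x \<otimes>\<^bsub>nr_prod R S\<^esub> y = (fst x \<otimes>\<^bsub>R\<^esub> fst y, snd x \<otimes>\<^bsub>S\<^esub> snd y)"
  "x \<oplus>\<^bsub>nr_prod R S\<^esub> y = (fst x \<oplus>\<^bsub>R\<^esub> fst y, snd x \<oplus>\<^bsub>S\<^esub> snd y)"
  "\<zero>\<^bsub>nr_prod R S\<^esub> = (\<zero>\<^bsub>R\<^esub>, \<zero>\<^bsub>S\<^esub>)"
  "\<one>\<^bsub>nr_prod R S\<^esub> = (\<one>\<^bsub>R\<^esub>, \<one>\<^bsub>S\<^esub>)"
  by (simp_all add: nr_prod_def)

lemma add_monoid_nr_prod: "add_monoid (nr_prod R S) = add_monoid R \<times>\<times> add_monoid S"
  by (simp add: nr_prod_def DirProd_def fun_eq_iff split_def)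

lemma add_monoid_nr_prod_restrict:
  "(add_monoid (nr_prod R S))\<lparr>carrier := P \<times> Q\<rparr>
     = (add_monoid R)\<lparr>carrier := P\<rparr> \<times>\<times> (add_monoid S)\<lparr>carrier := Q\<rparr>"
  by (simp add: nr_prod_def DirProd_def fun_eq_iff split_def)

lemma near_ring_nr_prod:
  assumes "near_ring R" "near_ring S"
  shows "near_ring (nr_prod R S)"
proof -
  interpret R: near_ring R by fact
  interpret S: near_ring S by fact
  show ?thesis
  proof (rule near_ring.intro)
    show "group (add_monoid (nr_prod R S))"
      unfolding add_monoid_nr_prod by (rule DirProd_group[OF R.add_group S.add_group])
  qed (auto simp: R.m_closed S.m_closed R.m_assoc S.m_assoc R.right_distrib S.right_distrib)
qed

lemma a_minus_nr_prod [simp]: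
  assumes "near_ring R" "near_ring S" "x \<in> carrier R \<times> carrier S" "y \<in> carrier R \<times> carrier S"
  shows "x \<ominus>\<^bsub>nr_prod R S\<^esub> y = (fst x \<ominus>\<^bsub>R\<^esub> fst y, snd x \<ominus>\<^bsub>S\<^esub> snd y)"
  unfolding a_minus_def a_inv_def add_monoid_nr_prod
  using assms inv_DirProd[OF near_ring.add_group near_ring.add_group, of R S "fst y" "snd y"]
  by (auto simp del: inv_DirProd)

lemma set_mult_nr_prod_Times:
  "set_mult (nr_prod R S) (U \<times> V) (U' \<times> V') = set_mult R U U' \<times> set_mult S V V'"
  unfolding set_mult_def by force

lemma nr_ideal_Times:
  assumes R: "near_ring R" and S: "near_ring S" and P: "nr_ideal R P" and Q: "nr_ideal S Q"
  shows "nr_ideal (nr_prod R S) (P \<times> Q)"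
proof -
  interpret R: near_ring R by fact
  interpret S: near_ring S by fact
  have "P \<times> Q \<lhd> add_monoid (nr_prod R S)"
    unfolding add_monoid_nr_prod
    using R.add.DirProd_normal[OF S.add_group] P Q unfolding nr_ideal_def by blast
  moreover have "(n \<oplus>\<^bsub>nr_prod R S\<^esub> i) \<otimes>\<^bsub>nr_prod R S\<^esub> m \<ominus>\<^bsub>nr_prod R S\<^esub> n \<otimes>\<^bsub>nr_prod R S\<^esub> m \<in> P \<times> Q"
    if "n \<in> carrier R \<times> carrier S" "m \<in> carrier R \<times> carrier S" "i \<in> P \<times> Q" for n m i
  proof -
    obtain n1 n2 m1 m2 i1 i2 where nmi: "n = (n1, n2)" "m = (m1, m2)" "i = (i1, i2)"
      by (metis surj_pair)
    have carr: "n1 \<in> carrier R" "m1 \<in> carrier R" "i1 \<in> carrier R"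
      "n2 \<in> carrier S" "m2 \<in> carrier S" "i2 \<in> carrier S"
      using that nmi nr_ideal_subset[OF P] nr_ideal_subset[OF Q] by auto
    have "(n1 \<oplus>\<^bsub>R\<^esub> i1) \<otimes>\<^bsub>R\<^esub> m1 \<ominus>\<^bsub>R\<^esub> n1 \<otimes>\<^bsub>R\<^esub> m1 \<in> P"
      and "(n2 \<oplus>\<^bsub>S\<^esub> i2) \<otimes>\<^bsub>S\<^esub> m2 \<ominus>\<^bsub>S\<^esub> n2 \<otimes>\<^bsub>S\<^esub> m2 \<in> Q"
      using P Q that nmi carr unfolding nr_ideal_def by auto
    then show ?thesis
      using carr nmi R S by (simp add: R.m_closed S.m_closed)
  qed
  ultimately show ?thesis
    using P Q unfolding nr_ideal_def by auto
qed

lemma nr_ideal_image: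
  assumes T: "near_ring T"
    and f: "group_hom (add_monoid T) (add_monoid R) f" and f_surj: "f ` carrier T = carrier R"
    and f_mult: "\<And>x y. x \<in> carrier T \<Longrightarrow> y \<in> carrier T \<Longrightarrow> f (x \<otimes>\<^bsub>T\<^esub> y) = f x \<otimes>\<^bsub>R\<^esub> f y"
    and I: "nr_ideal T I"
  shows "nr_ideal R (f ` I)"
  unfolding nr_ideal_def
proof (intro conjI ballI)
  interpret T: near_ring T by fact
  interpret f: group_hom "add_monoid T" "add_monoid R" f by fact
  have I_sub: "I \<subseteq> carrier T"
    using nr_ideal_subset[OF I] .
  have "I \<lhd> add_monoid T"
    using I unfolding nr_ideal_def by blast
  then show "f ` I \<lhd> add_monoid R"
    using normal.surj_hom_normal_subgroup[OF _ f] f_surj by simp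
  fix n x assume n: "n \<in> carrier R" and x: "x \<in> f ` I"
  obtain n' where n': "n' \<in> carrier T" "n = f n'"
    using n f_surj by blast
  obtain i where i: "i \<in> I" "x = f i"
    using x by blast
  have "n' \<otimes>\<^bsub>T\<^esub> i \<in> I"
    using I n'(1) i(1) unfolding nr_ideal_def by blast
  moreover have "f (n' \<otimes>\<^bsub>T\<^esub> i) = n \<otimes>\<^bsub>R\<^esub> x"
    using f_mult[of n' i] n' i I_sub by blast
  ultimately show "n \<otimes>\<^bsub>R\<^esub> x \<in> f ` I"
    by (metis image_eqI)
  fix m assume m: "m \<in> carrier R"
  obtain m' where m': "m' \<in> carrier T" "m = f m'"
    using m f_surj by blast
  have "(n' \<oplus>\<^bsub>T\<^esub> i) \<otimes>\<^bsub>T\<^esub> m' \<ominus>\<^bsub>T\<^esub> n' \<otimes>\<^bsub>T\<^esub> m' \<in> I"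
    using I n'(1) m'(1) i(1) unfolding nr_ideal_def by blast
  moreover have "f ((n' \<oplus>\<^bsub>T\<^esub> i) \<otimes>\<^bsub>T\<^esub> m' \<ominus>\<^bsub>T\<^esub> n' \<otimes>\<^bsub>T\<^esub> m')
      = (n \<oplus>\<^bsub>R\<^esub> x) \<otimes>\<^bsub>R\<^esub> m \<ominus>\<^bsub>R\<^esub> n \<otimes>\<^bsub>R\<^esub> m"
  proof -
    have i_T: "i \<in> carrier T"
      using i(1) I_sub by blast
    have "f (n' \<oplus>\<^bsub>T\<^esub> i) = n \<oplus>\<^bsub>R\<^esub> x"
      using f.hom_mult[of n' i] n' i i_T by simp
    then show ?thesis
      using f.hom_mult[of "(n' \<oplus>\<^bsub>T\<^esub> i) \<otimes>\<^bsub>T\<^esub> m'" "\<ominus>\<^bsub>T\<^esub> (n' \<otimes>\<^bsub>T\<^esub> m')"]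
        f.hom_inv[of "n' \<otimes>\<^bsub>T\<^esub> m'", folded a_inv_def] n' m' i_T
      by (simp add: a_minus_def f_mult T.m_closed)
  qed
  ultimately show "(n \<oplus>\<^bsub>R\<^esub> x) \<otimes>\<^bsub>R\<^esub> m \<ominus>\<^bsub>R\<^esub> n \<otimes>\<^bsub>R\<^esub> m \<in> f ` I"
    by (metis image_eqI)
qed

lemma nr_ideal_fst_image:
  assumes "near_ring R" "near_ring S" "nr_ideal (nr_prod R S) I"
  shows "nr_ideal R (fst ` I)"
proof (rule nr_ideal_image[OF near_ring_nr_prod[OF assms(1,2)] _ _ _ assms(3)])
  interpret R: near_ring R by fact
  interpret S: near_ring S by fact
  show "group_hom (add_monoid (nr_prod R S)) (add_monoid R) fst"
    unfolding add_monoid_nr_prod group_hom_def group_hom_axioms_def hom_def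
    using DirProd_group[OF R.add_group S.add_group] by (auto simp: mult_DirProd' R.add_group)
  show "fst ` carrier (nr_prod R S) = carrier R"
    using S.add.one_closed by force
qed simp

lemma nr_ideal_snd_image:
  assumes "near_ring R" "near_ring S" "nr_ideal (nr_prod R S) I"
  shows "nr_ideal S (snd ` I)"
proof (rule nr_ideal_image[OF near_ring_nr_prod[OF assms(1,2)] _ _ _ assms(3)])
  interpret R: near_ring R by fact
  interpret S: near_ring S by fact
  show "group_hom (add_monoid (nr_prod R S)) (add_monoid S) snd"
    unfolding add_monoid_nr_prod group_hom_def group_hom_axioms_def hom_def
    using DirProd_group[OF R.add_group S.add_group] by (auto simp: mult_DirProd' S.add_group)
  show "snd ` carrier (nr_prod R S) = carrier S"
    using R.add.one_closed by force
qed simp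

lemma nr_ideal_nr_prod_fst_zero:
  assumes "near_ring S" "monoid R" "nr_ideal (nr_prod R S) I" "(a, b) \<in> I"
  shows "(a, \<zero>\<^bsub>S\<^esub>) \<in> I"
proof -
  interpret S: near_ring S by fact
  have "(a, b) \<in> carrier R \<times> carrier S"
    using assms(3,4) nr_ideal_subset by fastforce
  moreover have "(\<one>\<^bsub>R\<^esub>, \<zero>\<^bsub>S\<^esub>) \<otimes>\<^bsub>nr_prod R S\<^esub> (a, b) \<in> I"
    using assms(3,4) monoid.one_closed[OF assms(2)] S.add.one_closed unfolding nr_ideal_def by force
  ultimately show ?thesis
    using monoid.l_one[OF assms(2)] by (simp add: S.l_null)
qed

lemma nr_ideal_nr_prod_snd_zero:
  assumes "near_ring R" "monoid S" "nr_ideal (nr_prod R S) I" "(a, b) \<in> I"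
  shows "(\<zero>\<^bsub>R\<^esub>, b) \<in> I"
proof -
  interpret R: near_ring R by fact
  have "(a, b) \<in> carrier R \<times> carrier S"
    using assms(3,4) nr_ideal_subset by fastforce
  moreover have "(\<zero>\<^bsub>R\<^esub>, \<one>\<^bsub>S\<^esub>) \<otimes>\<^bsub>nr_prod R S\<^esub> (a, b) \<in> I"
    using assms(3,4) monoid.one_closed[OF assms(2)] R.add.one_closed unfolding nr_ideal_def by force
  ultimately show ?thesis
    using monoid.l_one[OF assms(2)] by (simp add: R.l_null)
qed

lemma nr_ideal_nr_prod_eq_Times:
  assumes "near_ring R" "near_ring S" "monoid R" "monoid S" and I: "nr_ideal (nr_prod R S) I"
  shows "I = fst ` I \<times> snd ` I"
proof
  show "fst ` I \<times> snd ` I \<subseteq> I"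
  proof clarify
    interpret R: near_ring R by fact
    interpret S: near_ring S by fact
    fix a b a' b' assume ab: "(a, b) \<in> I" and ab': "(a', b') \<in> I"
    have "(a, \<zero>\<^bsub>S\<^esub>) \<oplus>\<^bsub>nr_prod R S\<^esub> (\<zero>\<^bsub>R\<^esub>, b') \<in> I"
      using I nr_ideal_nr_prod_fst_zero[OF assms(2,3) I ab] nr_ideal_nr_prod_snd_zero[OF assms(1,4) I ab']
      by (rule nr_ideal_add_closed)
    moreover have "a \<in> carrier R" "b' \<in> carrier S"
      using nr_ideal_subset[OF I] ab ab' by auto
    ultimately show "(fst (a, b), snd (a', b')) \<in> I"
      by (metis R.add.r_one S.add.l_one fst_conv snd_conv nr_prod_simps(3))
  qed
qed force

lemma generate_DirProd:
  assumes A: "group A" and B: "group B"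
    and sub: "\<And>s. s \<in> T \<Longrightarrow> subgroup (F s) A \<and> subgroup (H s) B"
  shows "generate (A \<times>\<times> B) (\<Union>s\<in>T. F s \<times> H s)
       = generate A (\<Union>s\<in>T. F s) \<times> generate B (\<Union>s\<in>T. H s)"
    (is "generate (A \<times>\<times> B) ?X = generate A ?F \<times> generate B ?H")
proof
  interpret A: group A by fact
  interpret B: group B by fact
  interpret AB: group "A \<times>\<times> B" using DirProd_group[OF A B] .
  have F_sub: "?F \<subseteq> carrier A" and H_sub: "?H \<subseteq> carrier B"
    using sub subgroup.subset by blast+
  have ones: "\<one>\<^bsub>A\<^esub> \<in> F s" "\<one>\<^bsub>B\<^esub> \<in> H s" if "s \<in> T" for s
    using sub[OF that] subgroup.one_closed by blast+
  show "generate (A \<times>\<times> B) ?X \<subseteq> generate A ?F \<times> generate B ?H"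
  proof (rule AB.generate_subgroup_incl)
    show "?X \<subseteq> generate A ?F \<times> generate B ?H"
      by (blast intro: generate.incl)
    show "subgroup (generate A ?F \<times> generate B ?H) (A \<times>\<times> B)"
      by (rule DirProd_subgroups[OF A A.generate_is_subgroup[OF F_sub] B B.generate_is_subgroup[OF H_sub]])
  qed
  have left: "group_hom A (A \<times>\<times> B) (\<lambda>x. (x, \<one>\<^bsub>B\<^esub>))"
    and right: "group_hom B (A \<times>\<times> B) (\<lambda>y. (\<one>\<^bsub>A\<^esub>, y))"
    unfolding group_hom_def group_hom_axioms_def hom_def
    using A B AB.is_group by auto
  have "generate (A \<times>\<times> B) ((\<lambda>x. (x, \<one>\<^bsub>B\<^esub>)) ` ?F) \<subseteq> generate (A \<times>\<times> B) ?X"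
    using ones by (intro AB.mono_generate) blast
  then have left_in: "(a, \<one>\<^bsub>B\<^esub>) \<in> generate (A \<times>\<times> B) ?X" if "a \<in> generate A ?F" for a
    using group_hom.generate_img[OF left F_sub] that by blast
  have "generate (A \<times>\<times> B) ((\<lambda>y. (\<one>\<^bsub>A\<^esub>, y)) ` ?H) \<subseteq> generate (A \<times>\<times> B) ?X"
    using ones by (intro AB.mono_generate) blast
  then have right_in: "(\<one>\<^bsub>A\<^esub>, b) \<in> generate (A \<times>\<times> B) ?X" if "b \<in> generate B ?H" for b
    using group_hom.generate_img[OF right H_sub] that by blast
  show "generate A ?F \<times> generate B ?H \<subseteq> generate (A \<times>\<times> B) ?X"
  proof clarify
    fix a b assume a: "a \<in> generate A ?F" and b: "b \<in> generate B ?H"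
    have "(a, \<one>\<^bsub>B\<^esub>) \<otimes>\<^bsub>A \<times>\<times> B\<^esub> (\<one>\<^bsub>A\<^esub>, b) \<in> generate (A \<times>\<times> B) ?X"
      using left_in[OF a] right_in[OF b] by (rule generate.eng)
    then show "(a, b) \<in> generate (A \<times>\<times> B) ?X"
      using A.generate_in_carrier[OF F_sub a] B.generate_in_carrier[OF H_sub b] by simp
  qed
qed

lemma internal_direct_sum_DirProd:
  assumes A: "group A" and B: "group B"
    and F: "internal_direct_sum A F" and H: "internal_direct_sum B H"
  shows "internal_direct_sum (A \<times>\<times> B) (\<lambda>g. F g \<times> H g)"
proof -
  have normal: "\<And>s. F s \<lhd> A" "\<And>s. H s \<lhd> B"
    and spans: "generate A (\<Union>s. F s) = carrier A" "generate B (\<Union>s. H s) = carrier B"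
    and indep: "\<And>s. F s \<inter> generate A (\<Union>t\<in>-{s}. F t) = {\<one>\<^bsub>A\<^esub>}"
      "\<And>s. H s \<inter> generate B (\<Union>t\<in>-{s}. H t) = {\<one>\<^bsub>B\<^esub>}"
    using F H unfolding internal_direct_sum_def by simp_all
  have gen: "generate (A \<times>\<times> B) (\<Union>s\<in>T. F s \<times> H s) = generate A (\<Union>s\<in>T. F s) \<times> generate B (\<Union>s\<in>T. H s)"
    for T by (rule generate_DirProd[OF A B]) (simp add: normal normal_imp_subgroup)
  show ?thesis
    unfolding internal_direct_sum_def
  proof (intro conjI allI)
    show "F s \<times> H s \<lhd> A \<times>\<times> B" for s
      by (rule group.DirProd_normal[OF A B normal])
    show "generate (A \<times>\<times> B) (\<Union>s. F s \<times> H s) = carrier (A \<times>\<times> B)"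
      using gen[of UNIV] spans by (simp only: carrier_DirProd)
    show "(F s \<times> H s) \<inter> generate (A \<times>\<times> B) (\<Union>t\<in>-{s}. F t \<times> H t) = {\<one>\<^bsub>A \<times>\<times> B\<^esub>}" for s
      unfolding gen Times_Int_Times indep by simp
  qed
qed

lemma graded_ideal_Times:
  assumes R: "near_ring R" and S: "near_ring S"
    and P: "graded_ideal R NG P" and Q: "graded_ideal S MG Q"
  shows "graded_ideal (nr_prod R S) (prod_grading NG MG) (P \<times> Q)"
proof -
  have ideals: "nr_ideal R P" "nr_ideal S Q"
    and sums: "internal_direct_sum ((add_monoid R)\<lparr>carrier := P\<rparr>) (\<lambda>g. P \<inter> NG g)"
      "internal_direct_sum ((add_monoid S)\<lparr>carrier := Q\<rparr>) (\<lambda>g. Q \<inter> MG g)"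
    using P Q unfolding graded_ideal_def by blast+
  have groups: "group ((add_monoid R)\<lparr>carrier := P\<rparr>)" "group ((add_monoid S)\<lparr>carrier := Q\<rparr>)"
    using ideals R S unfolding nr_ideal_def
    by (metis group.subgroup_imp_group near_ring.add_group normal_imp_subgroup)+
  have "(\<lambda>g. (P \<times> Q) \<inter> prod_grading NG MG g) = (\<lambda>g. (P \<inter> NG g) \<times> (Q \<inter> MG g))"
    unfolding prod_grading_def by auto
  then show ?thesis
    unfolding graded_ideal_def add_monoid_nr_prod_restrict
    using nr_ideal_Times[OF R S ideals] internal_direct_sum_DirProd[OF groups sums] by simp
qed

lemma graded_ideal_carrier:
  assumes "graded_near_ring R NG"
  shows "graded_ideal R NG (carrier R)"
proof -
  have "near_ring R" and sum: "internal_direct_sum (add_monoid R) NG"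
    using assms unfolding graded_near_ring_def by blast+
  moreover have "carrier R \<inter> NG g = NG g" for g
    using sum unfolding internal_direct_sum_def
    by (metis inf.absorb2 normal_imp_subgroup partial_object.select_convs(1) subgroup.subset)
  ultimately show ?thesis
    unfolding graded_ideal_def by (simp add: near_ring.nr_ideal_carrier)
qed

lemma graded_primeI:
  assumes "graded_ideal R NG P" "P \<noteq> carrier R"
    and "\<And>A B g h. nr_ideal R A \<Longrightarrow> nr_ideal R B \<Longrightarrow>
      set_mult R (A \<inter> NG g) (B \<inter> NG h) \<subseteq> P \<inter> NG (g * h) \<Longrightarrow>
      A \<inter> NG g \<subseteq> P \<inter> NG g \<or> B \<inter> NG h \<subseteq> P \<inter> NG h"
  shows "graded_prime R NG P"
  unfolding graded_prime_def using assms by blast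

lemma graded_primeD:
  assumes "graded_prime R NG P" "nr_ideal R A" "nr_ideal R B"
    and "set_mult R (A \<inter> NG g) (B \<inter> NG h) \<subseteq> P \<inter> NG (g * h)"
  shows "A \<inter> NG g \<subseteq> P \<inter> NG g \<or> B \<inter> NG h \<subseteq> P \<inter> NG h"
  using assms unfolding graded_prime_def by blast

lemma graded_prime_imp_graded_ideal: "graded_prime R NG P \<Longrightarrow> graded_ideal R NG P"
  unfolding graded_prime_def by blast

lemma graded_prime_imp_nr_ideal: "graded_prime R NG P \<Longrightarrow> nr_ideal R P"
  unfolding graded_prime_def graded_ideal_def by blast

lemma graded_prime_psubset:
  assumes "graded_prime R NG P"
  shows "P \<subset> carrier R"
proof -
  have "P \<noteq> carrier R"
    using assms by (simp add: graded_prime_def)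
  then show ?thesis
    using nr_ideal_subset[OF graded_prime_imp_nr_ideal[OF assms]] by blast
qed

lemma graded_prime_vimage:
  assumes P: "graded_prime R NG P"
    and Q: "graded_ideal T TG Q" and Q_eq: "Q = {x \<in> carrier T. f x \<in> P}"
    and f_surj: "f ` carrier T = carrier R"
    and f_mult: "\<And>x y. x \<in> carrier T \<Longrightarrow> y \<in> carrier T \<Longrightarrow> f (x \<otimes>\<^bsub>T\<^esub> y) = f x \<otimes>\<^bsub>R\<^esub> f y"
    and f_grading: "\<And>g. f ` TG g \<subseteq> NG g"
    and f_ideal: "\<And>A. nr_ideal T A \<Longrightarrow> nr_ideal R (f ` A)"
    and f_homogeneous: "\<And>A g. nr_ideal T A \<Longrightarrow> f ` (A \<inter> TG g) = f ` A \<inter> NG g"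
  shows "graded_prime T TG Q"
proof (rule graded_primeI[OF Q])
  obtain r where r: "r \<in> carrier R" "r \<notin> P"
    using graded_prime_psubset[OF P] by blast
  then obtain t where "t \<in> carrier T" "f t = r"
    using f_surj by (metis imageE)
  then show "Q \<noteq> carrier T"
    using Q_eq r by blast
  have lift: "A \<inter> TG k \<subseteq> Q \<inter> TG k" if "nr_ideal T A" "f ` A \<inter> NG k \<subseteq> P \<inter> NG k" for A k
    using that f_homogeneous[of A k] nr_ideal_subset[of T A] Q_eq by blast
  fix A B g h
  assume A: "nr_ideal T A" and B: "nr_ideal T B"
    and AB: "set_mult T (A \<inter> TG g) (B \<inter> TG h) \<subseteq> Q \<inter> TG (g * h)"
  have "set_mult R (f ` (A \<inter> TG g)) (f ` (B \<inter> TG h)) \<subseteq> f ` set_mult T (A \<inter> TG g) (B \<inter> TG h)"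
  proof
    fix z assume "z \<in> set_mult R (f ` (A \<inter> TG g)) (f ` (B \<inter> TG h))"
    then obtain a b where a: "a \<in> A \<inter> TG g" and b: "b \<in> B \<inter> TG h" and z: "z = f a \<otimes>\<^bsub>R\<^esub> f b"
      unfolding set_mult_def by blast
    have "a \<in> carrier T" "b \<in> carrier T"
      using a b nr_ideal_subset[OF A] nr_ideal_subset[OF B] by blast+
    then have "z = f (a \<otimes>\<^bsub>T\<^esub> b)"
      using z f_mult by simp
    then show "z \<in> f ` set_mult T (A \<inter> TG g) (B \<inter> TG h)"
      using a b unfolding set_mult_def by blast
  qed
  also have "\<dots> \<subseteq> P \<inter> NG (g * h)"
    using AB Q_eq f_grading by blast
  finally have "set_mult R (f ` A \<inter> NG g) (f ` B \<inter> NG h) \<subseteq> P \<inter> NG (g * h)"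
    by (simp add: f_homogeneous A B)
  then have "f ` A \<inter> NG g \<subseteq> P \<inter> NG g \<or> f ` B \<inter> NG h \<subseteq> P \<inter> NG h"
    using graded_primeD[OF P f_ideal[OF A] f_ideal[OF B]] by blast
  then show "A \<inter> TG g \<subseteq> Q \<inter> TG g \<or> B \<inter> TG h \<subseteq> Q \<inter> TG h"
    using lift A B by blast
qed

lemma graded_near_ring_zero_mem: "graded_near_ring R NG \<Longrightarrow> \<zero>\<^bsub>R\<^esub> \<in> NG g"
  unfolding graded_near_ring_def internal_direct_sum_def
  using normal_imp_subgroup subgroup.one_closed by fastforce

lemma graded_prime_Times_carrier:
  assumes R: "graded_near_ring R NG" "monoid R" and S: "graded_near_ring S MG"
    and P: "graded_prime R NG P"
  shows "graded_prime (nr_prod R S) (prod_grading NG MG) (P \<times> carrier S)"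
proof (rule graded_prime_vimage[OF P, where f = fst])
  have nR: "near_ring R" and nS: "near_ring S"
    using R S unfolding graded_near_ring_def by blast+
  show "graded_ideal (nr_prod R S) (prod_grading NG MG) (P \<times> carrier S)"
    using graded_ideal_Times[OF nR nS graded_prime_imp_graded_ideal[OF P] graded_ideal_carrier[OF S]] .
  show "P \<times> carrier S = {x \<in> carrier (nr_prod R S). fst x \<in> P}"
    using nr_ideal_subset[OF graded_prime_imp_nr_ideal[OF P]] by auto
  show "fst ` carrier (nr_prod R S) = carrier R"
    using near_ring.add_group[OF nS] monoid.one_closed[OF group.is_monoid] by force
  show "fst ` prod_grading NG MG g \<subseteq> NG g" for g
    unfolding prod_grading_def by auto
  show "nr_ideal R (fst ` A)" if "nr_ideal (nr_prod R S) A" for A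
    using nr_ideal_fst_image[OF nR nS that] .
  show "fst ` (A \<inter> prod_grading NG MG g) = fst ` A \<inter> NG g" if A: "nr_ideal (nr_prod R S) A" for A g
  proof
    show "fst ` A \<inter> NG g \<subseteq> fst ` (A \<inter> prod_grading NG MG g)"
    proof clarify
      fix a b assume "(a, b) \<in> A" "fst (a, b) \<in> NG g"
      then have "(a, \<zero>\<^bsub>S\<^esub>) \<in> A \<inter> prod_grading NG MG g"
        using nr_ideal_nr_prod_fst_zero[OF nS R(2) A] graded_near_ring_zero_mem[OF S]
        unfolding prod_grading_def by simp
      then show "fst (a, b) \<in> fst ` (A \<inter> prod_grading NG MG g)"
        by (metis fst_conv image_eqI)
    qed
  qed (auto simp: prod_grading_def)
qed simp

lemma graded_prime_carrier_Times:
  assumes R: "graded_near_ring R NG" and S: "graded_near_ring S MG" "monoid S"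
    and Q: "graded_prime S MG Q"
  shows "graded_prime (nr_prod R S) (prod_grading NG MG) (carrier R \<times> Q)"
proof (rule graded_prime_vimage[OF Q, where f = snd])
  have nR: "near_ring R" and nS: "near_ring S"
    using R S unfolding graded_near_ring_def by blast+
  show "graded_ideal (nr_prod R S) (prod_grading NG MG) (carrier R \<times> Q)"
    using graded_ideal_Times[OF nR nS graded_ideal_carrier[OF R] graded_prime_imp_graded_ideal[OF Q]] .
  show "carrier R \<times> Q = {x \<in> carrier (nr_prod R S). snd x \<in> Q}"
    using nr_ideal_subset[OF graded_prime_imp_nr_ideal[OF Q]] by auto
  show "snd ` carrier (nr_prod R S) = carrier S"
    using near_ring.add_group[OF nR] monoid.one_closed[OF group.is_monoid] by force
  show "snd ` prod_grading NG MG g \<subseteq> MG g" for g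
    unfolding prod_grading_def by auto
  show "nr_ideal S (snd ` A)" if "nr_ideal (nr_prod R S) A" for A
    using nr_ideal_snd_image[OF nR nS that] .
  show "snd ` (A \<inter> prod_grading NG MG g) = snd ` A \<inter> MG g" if A: "nr_ideal (nr_prod R S) A" for A g
  proof
    show "snd ` A \<inter> MG g \<subseteq> snd ` (A \<inter> prod_grading NG MG g)"
    proof clarify
      fix a b assume "(a, b) \<in> A" "snd (a, b) \<in> MG g"
      then have "(\<zero>\<^bsub>R\<^esub>, b) \<in> A \<inter> prod_grading NG MG g"
        using nr_ideal_nr_prod_snd_zero[OF nR S(2) A] graded_near_ring_zero_mem[OF R]
        unfolding prod_grading_def by simp
      then show "snd (a, b) \<in> snd ` (A \<inter> prod_grading NG MG g)"
        by (metis snd_conv image_eqI)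
    qed
  qed (auto simp: prod_grading_def)
qed simp

lemma ideal_list_prod_nr_prod:
  "L \<noteq> [] \<Longrightarrow> ideal_list_prod (nr_prod R S) (map (\<lambda>(U, V). U \<times> V) L)
     = ideal_list_prod R (map fst L) \<times> ideal_list_prod S (map snd L)"
proof (induction L)
  case (Cons UV L)
  then show ?case
    by (cases "L = []") (auto simp: ideal_list_prod_Cons set_mult_nr_prod_Times split: prod.split)
qed simp

lemma ideal_list_prod_nr_prod_factors:
  assumes R: "near_ring R" "monoid R" and S: "near_ring S" "monoid S"
    and Ps: "\<forall>P\<in>set Ps. nr_ideal R P" and Qs: "\<forall>Q\<in>set Qs. nr_ideal S Q"
    and nonempty: "Ps \<noteq> [] \<or> Qs \<noteq> []"
  shows "ideal_list_prod (nr_prod R S) (map (\<lambda>P. P \<times> carrier S) Ps @ map (\<lambda>Q. carrier R \<times> Q) Qs)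
    = (if Ps = [] then carrier R else ideal_list_prod R Ps) \<times> (if Qs = [] then carrier S else ideal_list_prod S Qs)"
proof -
  define L where "L = map (\<lambda>P. (P, carrier S)) Ps @ map (\<lambda>Q. (carrier R, Q)) Qs"
  have "map (\<lambda>P. P \<times> carrier S) Ps @ map (\<lambda>Q. carrier R \<times> Q) Qs = map (\<lambda>(U, V). U \<times> V) L"
    unfolding L_def by simp
  moreover have "map fst L = Ps @ replicate (length Qs) (carrier R)"
    and "map snd L = replicate (length Ps) (carrier S) @ Qs"
    unfolding L_def by (simp_all add: comp_def map_replicate_const)
  moreover have "L \<noteq> []"
    using nonempty unfolding L_def by simp
  ultimately show ?thesis
    using ideal_list_prod_nr_prod[of L R S] nonempty
      near_ring.ideal_list_prod_append_carriers[OF R Ps, of "length Qs"]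
      near_ring.ideal_list_prod_carriers_append[OF S Qs, of "length Ps"]
    by simp
qed

lemma proper_ideals_prod_graded_primesE:
  assumes "proper_ideals_prod_graded_primes R NG" "nr_ideal R I"
  obtains Ps where "\<forall>P\<in>set Ps. graded_prime R NG P"
    and "I = (if Ps = [] then carrier R else ideal_list_prod R Ps)"
proof (cases "I = carrier R")
  case True
  then show ?thesis
    using that[of "[]"] by simp
next
  case False
  then show ?thesis
    using assms that unfolding proper_ideals_prod_graded_primes_def by fastforce
qed

theorem corollary2p19:
  fixes R :: "('a, 'm) ring_scheme" and S :: "('b, 'n) ring_scheme"
    and NG :: "'g::monoid_mult \<Rightarrow> 'a set" and MG :: "'g \<Rightarrow> 'b set"
  assumes "graded_near_ring R NG" and "monoid R"
    and "graded_near_ring S MG" and "monoid S"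
    and "proper_ideals_prod_graded_primes R NG"
    and "proper_ideals_prod_graded_primes S MG"
  shows "proper_ideals_prod_graded_primes (nr_prod R S) (prod_grading NG MG)"
  unfolding proper_ideals_prod_graded_primes_def
proof (intro allI impI, elim conjE)
  fix I assume I: "nr_ideal (nr_prod R S) I" and proper: "I \<noteq> carrier (nr_prod R S)"
  have R: "near_ring R" and S: "near_ring S"
    using assms(1,3) unfolding graded_near_ring_def by blast+
  obtain Ps where Ps: "\<forall>P\<in>set Ps. graded_prime R NG P"
    and I1: "fst ` I = (if Ps = [] then carrier R else ideal_list_prod R Ps)"
    using proper_ideals_prod_graded_primesE[OF assms(5) nr_ideal_fst_image[OF R S I]] .
  obtain Qs where Qs: "\<forall>Q\<in>set Qs. graded_prime S MG Q"
    and I2: "snd ` I = (if Qs = [] then carrier S else ideal_list_prod S Qs)"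
    using proper_ideals_prod_graded_primesE[OF assms(6) nr_ideal_snd_image[OF R S I]] .
  have I_eq: "I = fst ` I \<times> snd ` I"
    using nr_ideal_nr_prod_eq_Times[OF R S assms(2,4) I] .
  then have nonempty: "Ps \<noteq> [] \<or> Qs \<noteq> []"
    using proper I1 I2 by auto
  let ?L = "map (\<lambda>P. P \<times> carrier S) Ps @ map (\<lambda>Q. carrier R \<times> Q) Qs"
  have ideals: "\<forall>P\<in>set Ps. nr_ideal R P" "\<forall>Q\<in>set Qs. nr_ideal S Q"
    using Ps Qs graded_prime_imp_nr_ideal by blast+
  have "I = ideal_list_prod (nr_prod R S) ?L"
    unfolding ideal_list_prod_nr_prod_factors[OF R assms(2) S assms(4) ideals nonempty]
    using I_eq unfolding I1 I2 .
  moreover have "\<forall>P\<in>set ?L. graded_prime (nr_prod R S) (prod_grading NG MG) P"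
    using Ps Qs graded_prime_Times_carrier[OF assms(1,2,3)] graded_prime_carrier_Times[OF assms(1,3,4)]
    by auto
  ultimately show "\<exists>Ps. Ps \<noteq> [] \<and> (\<forall>P\<in>set Ps. graded_prime (nr_prod R S) (prod_grading NG MG) P)
      \<and> I = ideal_list_prod (nr_prod R S) Ps"
    using nonempty by (metis Nil_is_append_conv Nil_is_map_conv)
qed

end
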